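(* Let $(G,+)$ be a finite abelian group with identity $0$, and let $\cdot$ be a binary operation on $G$ making $(G,+,\cdot)$ a commutative associative (not necessarily unital) ring in which every element has an inverse under the circle operation $x\circ y=x+y+x\cdot y$. For $g\in G$ define $\tau_g:G\to G$ by $\tau_g(x)=g\circ x$, and let $T=\{\tau_g: g\in G\}$, a regular abelian subgroup of $\mathrm{Hol}(G)$. Then for each prime $p$ dividing $|G|$, the Sylow $p$-subgroup of $T$ is $T_p=\{\tau_g: g\in G_p\}$, where $G_p$ is the Sylow $p$-subgroup of $(G,+)$.
   Context: $\mathrm{Hol}(G)=\rho(G)\cdot\mathrm{Aut}(G)\subseteq\mathrm{Perm}(G)$ is the holomorph of $G$, with group operation composition of permutations. Under the hypotheses, $(G,\circ)$ is an abelian group with identity $0$, and $T$ (under composition) is a regular abelian subgroup of $\mathrm{Hol}(G)$, with $\tau_g\circ\tau_h=\tau_{g\circ h}$. *)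

theory Defs
  imports "HOL-Algebra.Coset" "HOL-Computational_Algebra.Primes"
begin

definition sylow_subgroup :: "('a, 'b) monoid_scheme \<Rightarrow> nat \<Rightarrow> 'a set \<Rightarrow> bool" where
  "sylow_subgroup G p H \<longleftrightarrow> subgroup H G \<and> card H = p ^ multiplicity p (order G)"

definition add_grp :: "'a::ab_group_add monoid" where
  "add_grp = \<lparr>carrier = UNIV, monoid.mult = (+), monoid.one = 0\<rparr>"

definition circ :: "'a::comm_ring \<Rightarrow> 'a \<Rightarrow> 'a" where
  "circ x y = x + y + x * y"

definition tau :: "'a::comm_ring \<Rightarrow> ('a \<Rightarrow> 'a)" where
  "tau g = (\<lambda>x. circ g x)"

definition T_grp :: "('a::comm_ring \<Rightarrow> 'a) monoid" where
  "T_grp = \<lparr>carrier = range tau, monoid.mult = (\<circ>), monoid.one = id\<rparr>"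

end

theory Submission
  imports Defs "HOL-Algebra.Multiplicative_Group"
begin

text \<open>In a finite abelian group the Sylow p-subgroup is the set of elements killed by the
  full p-power dividing the group order; in particular it is unique. In the additive group of
  the ring this set is an ideal, hence closed under the circle operation and its inverses, so
  its image under \<open>\<tau>\<close> is a subgroup of \<open>T\<close>. Since \<open>\<tau>\<close> is injective and \<open>T\<close> is abelian of
  order \<open>|G|\<close>, this image is the (unique) Sylow p-subgroup of \<open>T\<close>.\<close>

lemma (in group) pow_card_subgroup_eq_one:
  assumes "subgroup H G" "finite H" "x \<in> H"
  shows "x [^] card H = \<one>"
proof -
  interpret H: group "G\<lparr>carrier := H\<rparr>" using subgroup_imp_group[OF assms(1)] .
  have "x [^]\<^bsub>G\<lparr>carrier := H\<rparr>\<^esub> order (G\<lparr>carrier := H\<rparr>) = \<one>"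
    using H.pow_order_eq_1 assms(3) by simp
  then show ?thesis unfolding order_def by (simp add: nat_pow_consistent[symmetric])
qed

lemma coprime_cofactor_multiplicity:
  fixes n q :: nat
  assumes "prime p" "n \<noteq> 0" "q * p ^ multiplicity p n = n"
  shows "coprime q p"
proof -
  have "\<not> p dvd q"
  proof
    assume "p dvd q"
    then have "p ^ Suc (multiplicity p n) dvd n"
      using assms(3) by (metis mult_dvd_mono power_Suc dvd_refl mult.commute)
    then show False using assms(1,2)
      by (metis Suc_n_not_le_n not_prime_unit power_dvd_iff_le_multiplicity)
  qed
  then show ?thesis using assms(1) by (metis coprime_commute prime_imp_coprime)
qed

text \<open>The coset of \<open>x\<close> in \<open>G/P\<close> has p-power order dividing the p-free order of \<open>G/P\<close>,
  hence is trivial.\<close>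
lemma (in group) normal_sylow_subgroup_contains_p_power_elements:
  assumes "finite (carrier G)" "prime p" "P \<lhd> G" "sylow_subgroup G p P"
    and x: "x \<in> carrier G" "x [^] (p ^ k) = \<one>"
  shows "x \<in> P"
proof -
  interpret N: normal P G by fact
  interpret Q: group "G Mod P" by (rule N.factorgroup_is_group)
  have card_P: "card P = p ^ multiplicity p (order G)"
    using assms(4) by (simp add: sylow_subgroup_def)
  have coset: "P #> x \<in> carrier (G Mod P)"
    unfolding carrier_FactGroup using x by blast
  have "(P #> x) [^]\<^bsub>G Mod P\<^esub> (p ^ k) = P #> (x [^] (p ^ k))"
    using N.FactGroup_pow x by blast
  also have "\<dots> = \<one>\<^bsub>G Mod P\<^esub>"
    using x N.subgroup_axioms by (simp add: subgroup.subset)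
  finally have "Q.ord (P #> x) dvd p ^ k"
    using Q.pow_eq_id coset by blast
  moreover have "Q.ord (P #> x) dvd order (G Mod P)"
    using Q.ord_dvd_group_order coset by blast
  moreover have "coprime (order (G Mod P)) (p ^ k)"
  proof -
    have "order (G Mod P) * p ^ multiplicity p (order G) = order G"
      using lagrange[OF N.subgroup_axioms] card_P unfolding order_def FactGroup_def by simp
    then have "coprime (order (G Mod P)) p"
      using coprime_cofactor_multiplicity assms(1,2) order_gt_0_iff_finite by (metis not_gr0)
    then show ?thesis by simp
  qed
  ultimately have "Q.ord (P #> x) = 1"
    by (metis coprime_common_divisor_nat coprime_commute)
  then have "P #> x = P" using Q.ord_eq_1 coset by simp
  then show ?thesis using rcos_self x N.subgroup_axioms by metis
qed

lemma (in comm_group) sylow_subgroup_eq_p_power_torsion: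
  assumes "finite (carrier G)" "prime p" "sylow_subgroup G p P"
  shows "P = {x \<in> carrier G. x [^] (p ^ multiplicity p (order G)) = \<one>}"
proof -
  have P: "subgroup P G" "card P = p ^ multiplicity p (order G)"
    using assms(3) by (auto simp: sylow_subgroup_def)
  have "finite P" using assms(1) P(1) subgroup.subset finite_subset by blast
  then have "P \<subseteq> {x \<in> carrier G. x [^] (p ^ multiplicity p (order G)) = \<one>}"
    using P pow_card_subgroup_eq_one subgroup.mem_carrier by fastforce
  moreover have "{x \<in> carrier G. x [^] (p ^ multiplicity p (order G)) = \<one>} \<subseteq> P"
    using normal_sylow_subgroup_contains_p_power_elements[OF assms(1,2) _ assms(3)]
      subgroup_imp_normal[OF P(1)] by blast
  ultimately show ?thesis by blast
qed

corollary (in comm_group) sylow_subgroup_unique: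
  assumes "finite (carrier G)" "prime p" "sylow_subgroup G p P" "sylow_subgroup G p Q"
  shows "P = Q"
  using sylow_subgroup_eq_p_power_torsion assms by metis

lemma add_grp_comm_group: "comm_group (add_grp :: 'a::ab_group_add monoid)"
  unfolding add_grp_def
  by (rule comm_groupI) (auto simp: algebra_simps intro: exI[of _ "- x" for x])

lemma add_grp_nat_pow: "x [^]\<^bsub>(add_grp :: 'a::ab_group_add monoid)\<^esub> (n::nat) = (\<Sum>i<n. x)"
  by (induction n) (simp_all add: add_grp_def add.commute)

lemma circ_assoc: "circ (circ a b) c = circ a (circ b (c::'a::comm_ring))"
  unfolding circ_def by (simp add: algebra_simps)

lemma circ_commute: "circ a b = circ b (a::'a::comm_ring)"
  unfolding circ_def by (simp add: algebra_simps)

lemma tau_comp: "tau a \<circ> tau b = tau (circ a (b::'a::comm_ring))"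
  unfolding tau_def by (auto simp: circ_assoc)

lemma tau_zero: "tau (0::'a::comm_ring) = id"
  unfolding tau_def circ_def by auto

lemma inj_tau: "inj (tau :: 'a::comm_ring \<Rightarrow> _)"
proof
  fix a b :: 'a
  assume "tau a = tau b"
  then have "tau a 0 = tau b 0" by simp
  then show "a = b" unfolding tau_def circ_def by simp
qed

lemma tau_circ_inverse:
  fixes x y :: "'a::comm_ring"
  assumes "circ x y = 0"
  shows "inv\<^bsub>T_grp\<^esub> (tau x) = tau y"
proof -
  have "tau y \<circ> tau x = id" using assms by (simp add: tau_comp circ_commute tau_zero)
  moreover have "tau x \<circ> tau y = id" using assms by (simp add: tau_comp tau_zero)
  ultimately show ?thesis
    unfolding m_inv_def T_grp_def by (auto intro!: the_equality) (metis o_assoc id_o o_id)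
qed

lemma T_grp_comm_group:
  assumes "\<forall>x::'a::comm_ring. \<exists>y. circ x y = 0"
  shows "comm_group (T_grp :: ('a \<Rightarrow> 'a) monoid)"
proof (rule comm_groupI)
  fix f
  assume "f \<in> carrier (T_grp :: ('a \<Rightarrow> 'a) monoid)"
  then obtain x where x: "f = tau x" by (auto simp: T_grp_def)
  obtain y where "circ x y = 0" using assms by blast
  then have "tau y \<circ> tau x = id" by (simp add: tau_comp circ_commute tau_zero)
  then show "\<exists>g\<in>carrier T_grp. g \<otimes>\<^bsub>T_grp\<^esub> f = \<one>\<^bsub>T_grp\<^esub>"
    unfolding T_grp_def x by auto
qed (auto simp: T_grp_def tau_comp circ_commute o_assoc tau_zero[symmetric] circ_def)

text \<open>The circle inverse of \<open>x\<close> is \<open>-x - x * y\<close>, which lies in any ideal containing \<open>x\<close>.\<close>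
lemma subgroup_tau_image_ideal:
  fixes I :: "'a::comm_ring set"
  assumes circ_inv: "\<forall>x::'a. \<exists>y. circ x y = 0"
    and "0 \<in> I" "\<And>x y. x \<in> I \<Longrightarrow> y \<in> I \<Longrightarrow> x + y \<in> I"
    and "\<And>x. x \<in> I \<Longrightarrow> - x \<in> I" "\<And>x r. x \<in> I \<Longrightarrow> x * r \<in> I"
  shows "subgroup (tau ` I) T_grp"
proof (rule group.subgroupI)
  show "group (T_grp :: ('a \<Rightarrow> 'a) monoid)"
    using T_grp_comm_group[OF circ_inv] comm_group.axioms(2) by blast
  have circ_closed: "circ x y \<in> I" if "x \<in> I" "y \<in> I" for x y
    unfolding circ_def using assms(3,5) that by blast
  show "f \<otimes>\<^bsub>T_grp\<^esub> g \<in> tau ` I" if "f \<in> tau ` I" "g \<in> tau ` I" for f g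
    using that circ_closed by (auto simp: T_grp_def tau_comp)
  show "inv\<^bsub>T_grp\<^esub> f \<in> tau ` I" if "f \<in> tau ` I" for f
  proof -
    obtain x where x: "x \<in> I" "f = tau x" using \<open>f \<in> tau ` I\<close> by auto
    obtain y where y: "circ x y = 0" using circ_inv by blast
    then have "y = - x + - (x * y)" unfolding circ_def
      by (simp add: algebra_simps eq_neg_iff_add_eq_0 add.assoc)
    then have "y \<in> I" using x(1) assms(3-5) by metis
    then show ?thesis using x tau_circ_inverse[OF y] by auto
  qed
qed (use assms(2) in \<open>auto simp: T_grp_def\<close>)

lemma subgroup_tau_image_torsion:
  fixes n :: nat
  assumes "\<forall>x::'a::comm_ring. \<exists>y. circ x y = 0"
  shows "subgroup (tau ` {x::'a. (\<Sum>i<n. x) = 0}) T_grp"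
  using assms by (rule subgroup_tau_image_ideal)
    (simp_all add: sum.distrib sum_negf flip: sum_distrib_right)

theorem corollary5p3:
  fixes p :: nat and Gp :: "'a::{comm_ring, finite} set"
  assumes circ_inv: "\<forall>x::'a. \<exists>y. circ x y = 0"
    and "prime p" and "p dvd card (UNIV :: 'a set)"
    and "sylow_subgroup (add_grp :: 'a monoid) p Gp"
  shows "sylow_subgroup (T_grp :: ('a \<Rightarrow> 'a) monoid) p (tau ` Gp)
         \<and> (\<forall>S. sylow_subgroup (T_grp :: ('a \<Rightarrow> 'a) monoid) p S \<longrightarrow> S = tau ` Gp)"
proof -
  interpret A: comm_group "add_grp :: 'a monoid" by (rule add_grp_comm_group)
  interpret T: comm_group "T_grp :: ('a \<Rightarrow> 'a) monoid" by (rule T_grp_comm_group[OF circ_inv])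
  have carrier_A: "carrier (add_grp :: 'a monoid) = UNIV" by (simp add: add_grp_def)
  have carrier_T: "carrier (T_grp :: ('a \<Rightarrow> 'a) monoid) = range tau" by (simp add: T_grp_def)
  have order_T: "order (T_grp :: ('a \<Rightarrow> 'a) monoid) = order (add_grp :: 'a monoid)"
    unfolding order_def carrier_A carrier_T using inj_tau card_image by blast
  have "Gp = {x. (\<Sum>i<p ^ multiplicity p (order (add_grp :: 'a monoid)). x) = 0}"
    using A.sylow_subgroup_eq_p_power_torsion assms(2,4)
    by (simp add: carrier_A add_grp_nat_pow) (simp add: add_grp_def)
  then have "subgroup (tau ` Gp) T_grp"
    using subgroup_tau_image_torsion[OF circ_inv] by simp
  moreover have "card (tau ` Gp) = p ^ multiplicity p (order (T_grp :: ('a \<Rightarrow> 'a) monoid))"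
  proof -
    have "card (tau ` Gp) = card Gp" by (metis card_image inj_on_subset inj_tau subset_UNIV)
    then show ?thesis using assms(4) order_T by (simp add: sylow_subgroup_def)
  qed
  ultimately have "sylow_subgroup (T_grp :: ('a \<Rightarrow> 'a) monoid) p (tau ` Gp)"
    by (simp add: sylow_subgroup_def)
  moreover have "finite (carrier (T_grp :: ('a \<Rightarrow> 'a) monoid))" by (simp add: carrier_T)
  ultimately show ?thesis using T.sylow_subgroup_unique assms(2) by blast
qed

end
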